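(* Let $\Omega$ be a region of $\mathcal{C}^*_{n,A}$, let $\bm x\in\Omega$ with associated permutation $\pi$, and let $p_\pi(\Omega)$ be the partition of $\pi$ defined below. Then for $i,j\in[n]$, $i$ and $j$ are autonomous with respect to $(P_1,\dots,P_m)$ if and only if $i$ and $j$ lie in the same block of $p_\pi(\Omega)$.
   Context: Let $A=\{a_1,\dots,a_m\}$ with $a_1>\dots>a_m>0$; $\mathcal{C}^*_{n,A}$ is the arrangement in $\mathbb{R}^n$ of hyperplanes $x_i-x_j=a_k$ ($i\ne j$, $1\le k\le m$), and regions are connected components of the complement. The associated permutation of $\bm x$ is the unique $\pi\in\mathfrak{S}_n$ with $x_{\pi(1)}\ge\dots\ge x_{\pi(n)}$ and $\pi^{-1}(i)<\pi^{-1}(j)$ whenever $i<j$ and $x_i=x_j$. For $1\le k\le m$, $P_k$ is the poset on $[n]$ with $i<_{P_k}j$ iff $x_j-x_i>a_k$ (equivalently $[x_i-a_k,x_i]$ lies entirely to the left of $[x_j-a_k,x_j]$); it depends only on $\Omega$. For a poset $P$, $\Lambda_P(i)=\{j:j<_Pi\}$ and $V_P(i)=\{j:i<_Pj\}$; $i,j$ are autonomous with respect to $(P_1,\dots,P_m)$ if $\Lambda_{P_k}(i)=\Lambda_{P_k}(j)$ and $V_{P_k}(i)=V_{P_k}(j)$ for all $k$. Let $M_k$ be the matrix $(\operatorname{sgn}(x_{\pi(s)}-x_{\pi(t)}-a_k))_{s,t\in[n]}$. Call positions $s,t\in[n]$ equivalent if, for every $k$, rows $s$ and $t$ of $M_k$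 have the same number of $+$ entries and columns $s$ and $t$ of $M_k$ have the same number of $+$ entries. The equivalence classes are intervals of consecutive positions; $p_\pi(\Omega)$ is the partition of the word $\pi(1)\pi(2)\cdots\pi(n)$ into the consecutive subwords (blocks) indexed by these classes. *)

theory Defs
  imports Complex_Main "HOL-Combinatorics.Permutations"
begin

text \<open>Points of R^n are functions x :: nat => real, coordinates indexed by 1..n.
  The parameter set A = {a 1, ..., a m} with a 1 > ... > a m > 0.\<close>

definition decreasing_params :: "nat \<Rightarrow> (nat \<Rightarrow> real) \<Rightarrow> bool" where
  "decreasing_params m a \<longleftrightarrow>
     (\<forall>k. 1 \<le> k \<and> k < m \<longrightarrow> a (Suc k) < a k) \<and> (\<forall>k\<in>{1..m}. a k > 0)"

definition in_complement :: "nat \<Rightarrow> nat \<Rightarrow> (nat \<Rightarrow> real) \<Rightarrow> (nat \<Rightarrow> real) \<Rightarrow> bool" where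
  "in_complement n m a x \<longleftrightarrow>
     (\<forall>i\<in>{1..n}. \<forall>j\<in>{1..n}. i \<noteq> j \<longrightarrow> (\<forall>k\<in>{1..m}. x i - x j \<noteq> a k))"

definition assoc_perm :: "nat \<Rightarrow> (nat \<Rightarrow> real) \<Rightarrow> (nat \<Rightarrow> nat) \<Rightarrow> bool" where
  "assoc_perm n x \<pi> \<longleftrightarrow>
     \<pi> permutes {1..n} \<and>
     (\<forall>s\<in>{1..n}. \<forall>t\<in>{1..n}. s < t \<longrightarrow> x (\<pi> s) \<ge> x (\<pi> t)) \<and>
     (\<forall>i\<in>{1..n}. \<forall>j\<in>{1..n}. i < j \<and> x i = x j \<longrightarrow> inv \<pi> i < inv \<pi> j)"

definition P_less :: "(nat \<Rightarrow> real) \<Rightarrow> (nat \<Rightarrow> real) \<Rightarrow> nat \<Rightarrow> nat \<Rightarrow> nat \<Rightarrow> bool" where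
  "P_less a x k i j \<longleftrightarrow> x j - x i > a k"

definition Lambda_P :: "nat \<Rightarrow> (nat \<Rightarrow> real) \<Rightarrow> (nat \<Rightarrow> real) \<Rightarrow> nat \<Rightarrow> nat \<Rightarrow> nat set" where
  "Lambda_P n a x k i = {j\<in>{1..n}. P_less a x k j i}"

definition V_P :: "nat \<Rightarrow> (nat \<Rightarrow> real) \<Rightarrow> (nat \<Rightarrow> real) \<Rightarrow> nat \<Rightarrow> nat \<Rightarrow> nat set" where
  "V_P n a x k i = {j\<in>{1..n}. P_less a x k i j}"

definition autonomous :: "nat \<Rightarrow> nat \<Rightarrow> (nat \<Rightarrow> real) \<Rightarrow> (nat \<Rightarrow> real) \<Rightarrow> nat \<Rightarrow> nat \<Rightarrow> bool" where
  "autonomous n m a x i j \<longleftrightarrow>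
     (\<forall>k\<in>{1..m}. Lambda_P n a x k i = Lambda_P n a x k j \<and> V_P n a x k i = V_P n a x k j)"

definition M_entry :: "(nat \<Rightarrow> real) \<Rightarrow> (nat \<Rightarrow> real) \<Rightarrow> (nat \<Rightarrow> nat) \<Rightarrow> nat \<Rightarrow> nat \<Rightarrow> nat \<Rightarrow> real" where
  "M_entry a x \<pi> k s t = sgn (x (\<pi> s) - x (\<pi> t) - a k)"

definition row_plus :: "nat \<Rightarrow> (nat \<Rightarrow> real) \<Rightarrow> (nat \<Rightarrow> real) \<Rightarrow> (nat \<Rightarrow> nat) \<Rightarrow> nat \<Rightarrow> nat \<Rightarrow> nat" where
  "row_plus n a x \<pi> k s = card {t\<in>{1..n}. M_entry a x \<pi> k s t = 1}"

definition col_plus :: "nat \<Rightarrow> (nat \<Rightarrow> real) \<Rightarrow> (nat \<Rightarrow> real) \<Rightarrow> (nat \<Rightarrow> nat) \<Rightarrow> nat \<Rightarrow> nat \<Rightarrow> nat" where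
  "col_plus n a x \<pi> k s = card {t\<in>{1..n}. M_entry a x \<pi> k t s = 1}"

definition pos_equiv :: "nat \<Rightarrow> nat \<Rightarrow> (nat \<Rightarrow> real) \<Rightarrow> (nat \<Rightarrow> real) \<Rightarrow> (nat \<Rightarrow> nat) \<Rightarrow> nat \<Rightarrow> nat \<Rightarrow> bool" where
  "pos_equiv n m a x \<pi> s t \<longleftrightarrow>
     (\<forall>k\<in>{1..m}. row_plus n a x \<pi> k s = row_plus n a x \<pi> k t \<and>
                 col_plus n a x \<pi> k s = col_plus n a x \<pi> k t)"

text \<open>The blocks of p_pi(Omega): the sets of letters of the word pi(1)...pi(n)
  occupying an equivalence class of positions.\<close>
definition p_blocks :: "nat \<Rightarrow> nat \<Rightarrow> (nat \<Rightarrow> real) \<Rightarrow> (nat \<Rightarrow> real) \<Rightarrow> (nat \<Rightarrow> nat) \<Rightarrow> nat set set" where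
  "p_blocks n m a x \<pi> = {\<pi> ` {t\<in>{1..n}. pos_equiv n m a x \<pi> s t} | s. s \<in> {1..n}}"

end

theory Submission
  imports Defs
begin

text \<open>The number of + entries in row s (column s) of M_k is the size of the down-set
  (up-set) of \<pi> s in P_k, a threshold set {j. x j < x (\<pi> s) - a k} (resp.
  {j. x j > x (\<pi> s) + a k}). Threshold sets of one function are nested, so equal size
  forces equality: positions s and t are equivalent exactly when \<pi> s and \<pi> t are autonomous,
  and the blocks of p_\<pi>(\<Omega>) are the \<pi>-images of the equivalence classes.\<close>

lemma card_threshold_eq_iff:
  fixes f :: "'a \<Rightarrow> 'b::linorder"
  assumes "finite S"
  shows "card {j\<in>S. f j < c} = card {j\<in>S. f j < d} \<longleftrightarrow> {j\<in>S. f j < c} = {j\<in>S. f j < d}"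
proof
  assume card_eq: "card {j\<in>S. f j < c} = card {j\<in>S. f j < d}"
  show "{j\<in>S. f j < c} = {j\<in>S. f j < d}"
  proof (cases "c \<le> d")
    case True
    then have "{j\<in>S. f j < c} \<subseteq> {j\<in>S. f j < d}" by auto
    then show ?thesis using card_eq assms by (intro card_subset_eq) auto
  next
    case False
    then have "{j\<in>S. f j < d} \<subseteq> {j\<in>S. f j < c}" by auto
    then show ?thesis using card_eq assms by (intro card_subset_eq[symmetric]) auto
  qed
qed simp

lemma Lambda_P_eq_threshold: "Lambda_P n a x k i = {j\<in>{1..n}. x j < x i - a k}"
  unfolding Lambda_P_def P_less_def by auto

lemma V_P_eq_threshold: "V_P n a x k i = {j\<in>{1..n}. - x j < - x i - a k}"
  unfolding V_P_def P_less_def by auto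

lemma card_Lambda_P_eq_iff:
  "card (Lambda_P n a x k i) = card (Lambda_P n a x k j) \<longleftrightarrow>
   Lambda_P n a x k i = Lambda_P n a x k j"
  unfolding Lambda_P_eq_threshold by (rule card_threshold_eq_iff) simp

lemma card_V_P_eq_iff:
  "card (V_P n a x k i) = card (V_P n a x k j) \<longleftrightarrow> V_P n a x k i = V_P n a x k j"
  unfolding V_P_eq_threshold by (rule card_threshold_eq_iff[where f = "\<lambda>j. - x j"]) simp

lemma M_entry_eq_one_iff: "M_entry a x \<pi> k s t = 1 \<longleftrightarrow> a k < x (\<pi> s) - x (\<pi> t)"
  unfolding M_entry_def by (simp add: sgn_if)

lemma card_permutes_filter:
  assumes "\<pi> permutes S"
  shows "card {t\<in>S. P (\<pi> t)} = card {j\<in>S. P j}"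
proof -
  have "inj_on \<pi> {t\<in>S. P (\<pi> t)}"
    using permutes_inj[OF assms] by (simp add: inj_on_def inj_def)
  then have "card {t\<in>S. P (\<pi> t)} = card (\<pi> ` {t\<in>S. P (\<pi> t)})"
    by (rule card_image[symmetric])
  also have "\<pi> ` {t\<in>S. P (\<pi> t)} = {j\<in>S. P j}"
    using permutes_image[OF assms] by (auto simp: image_iff)
  finally show ?thesis .
qed

lemma row_plus_eq_card_Lambda_P:
  assumes "\<pi> permutes {1..n}"
  shows "row_plus n a x \<pi> k s = card (Lambda_P n a x k (\<pi> s))"
  unfolding row_plus_def M_entry_eq_one_iff Lambda_P_def P_less_def
  by (rule card_permutes_filter[OF assms, where P = "\<lambda>j. a k < x (\<pi> s) - x j"])

lemma col_plus_eq_card_V_P: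
  assumes "\<pi> permutes {1..n}"
  shows "col_plus n a x \<pi> k s = card (V_P n a x k (\<pi> s))"
  unfolding col_plus_def M_entry_eq_one_iff V_P_def P_less_def
  by (rule card_permutes_filter[OF assms, where P = "\<lambda>j. a k < x j - x (\<pi> s)"])

lemma pos_equiv_iff_autonomous:
  assumes "\<pi> permutes {1..n}"
  shows "pos_equiv n m a x \<pi> s t \<longleftrightarrow> autonomous n m a x (\<pi> s) (\<pi> t)"
  unfolding pos_equiv_def autonomous_def row_plus_eq_card_Lambda_P[OF assms]
    col_plus_eq_card_V_P[OF assms] card_Lambda_P_eq_iff card_V_P_eq_iff ..

lemma same_image_class_iff:
  assumes perm: "\<pi> permutes S"
    and refl: "\<And>s. R s s"
    and eucl: "\<And>s t u. R s t \<Longrightarrow> R s u \<Longrightarrow> R t u"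
    and "i \<in> S" "j \<in> S"
  shows "(\<exists>B\<in>{\<pi> ` {t\<in>S. R s t} | s. s \<in> S}. i \<in> B \<and> j \<in> B) \<longleftrightarrow> R (inv \<pi> i) (inv \<pi> j)"
proof
  assume "\<exists>B\<in>{\<pi> ` {t\<in>S. R s t} | s. s \<in> S}. i \<in> B \<and> j \<in> B"
  then obtain s t u where "R s t" "R s u" "i = \<pi> t" "j = \<pi> u"
    by auto
  moreover have "inv \<pi> (\<pi> y) = y" for y
    using permutes_inverses(2)[OF perm] .
  ultimately show "R (inv \<pi> i) (inv \<pi> j)"
    using eucl by metis
next
  assume R_ij: "R (inv \<pi> i) (inv \<pi> j)"
  have inv_in: "inv \<pi> y \<in> S" if "y \<in> S" for y
    using permutes_in_image[OF permutes_inv[OF perm]] that by simp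
  have "\<pi> (inv \<pi> y) = y" for y
    using permutes_inverses(1)[OF perm] .
  then have "i \<in> \<pi> ` {t\<in>S. R (inv \<pi> i) t}" "j \<in> \<pi> ` {t\<in>S. R (inv \<pi> i) t}"
    using refl[of "inv \<pi> i"] R_ij inv_in[OF \<open>i \<in> S\<close>] inv_in[OF \<open>j \<in> S\<close>]
    by (metis (no_types, lifting) image_eqI mem_Collect_eq)+
  then show "\<exists>B\<in>{\<pi> ` {t\<in>S. R s t} | s. s \<in> S}. i \<in> B \<and> j \<in> B"
    using inv_in[OF \<open>i \<in> S\<close>] by blast
qed

theorem lemma2p4:
  fixes n m :: nat and a x :: "nat \<Rightarrow> real" and \<pi> :: "nat \<Rightarrow> nat" and i j :: nat
  assumes "decreasing_params m a"
    and "in_complement n m a x"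
    and "assoc_perm n x \<pi>"
    and "i \<in> {1..n}" and "j \<in> {1..n}"
  shows "autonomous n m a x i j \<longleftrightarrow> (\<exists>B\<in>p_blocks n m a x \<pi>. i \<in> B \<and> j \<in> B)"
proof -
  have perm: "\<pi> permutes {1..n}"
    using assms(3) unfolding assoc_perm_def by simp
  have "(\<exists>B\<in>p_blocks n m a x \<pi>. i \<in> B \<and> j \<in> B) \<longleftrightarrow>
        pos_equiv n m a x \<pi> (inv \<pi> i) (inv \<pi> j)"
    unfolding p_blocks_def
    by (rule same_image_class_iff[OF perm _ _ assms(4,5)]) (simp_all add: pos_equiv_def)
  also have "\<dots> \<longleftrightarrow> autonomous n m a x i j"
    unfolding pos_equiv_iff_autonomous[OF perm] permutes_inverses(1)[OF perm] ..
  finally show ?thesis ..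
qed

end
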